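(* Let $G$ be a cubic graph of order $2n$ and let $\mathcal M=\{M_1,\ldots,M_t\}$ be a family of matchings of $G$ whose union is $E(G)$ and such that $\sum_{i=1}^t |M_i|=(n-1)t$. Then there exist $t$ matchings of $G$, each of size exactly $n-1$, whose union is $E(G)$.
   Context: All graphs are finite, simple, connected and cubic. *)

theory Defs
  imports Main
begin

definition simple_graph :: "'a set \<Rightarrow> 'a set set \<Rightarrow> bool" where
  "simple_graph V E \<longleftrightarrow> finite V \<and> (\<forall>e\<in>E. e \<subseteq> V \<and> card e = 2)"

definition degree :: "'a set set \<Rightarrow> 'a \<Rightarrow> nat" where
  "degree E v = card {e \<in> E. v \<in> e}"

definition cubic :: "'a set \<Rightarrow> 'a set set \<Rightarrow> bool" where
  "cubic V E \<longleftrightarrow> (\<forall>v\<in>V. degree E v = 3)"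

definition adj :: "'a set set \<Rightarrow> ('a \<times> 'a) set" where
  "adj E = {(u, v). {u, v} \<in> E}"

definition connected_graph :: "'a set \<Rightarrow> 'a set set \<Rightarrow> bool" where
  "connected_graph V E \<longleftrightarrow> V \<noteq> {} \<and> (\<forall>u\<in>V. \<forall>v\<in>V. (u, v) \<in> (adj E)\<^sup>*)"

definition cubic_graph :: "'a set \<Rightarrow> 'a set set \<Rightarrow> bool" where
  "cubic_graph V E \<longleftrightarrow> simple_graph V E \<and> connected_graph V E \<and> cubic V E"

definition matching :: "'a set set \<Rightarrow> 'a set set \<Rightarrow> bool" where
  "matching E M \<longleftrightarrow> M \<subseteq> E \<and> (\<forall>e1\<in>M. \<forall>e2\<in>M. e1 \<noteq> e2 \<longrightarrow> e1 \<inter> e2 = {})"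

end

theory Submission
  imports Defs
begin

(*
  If |B| < |A| for two matchings A and B, the edges of A \<union> B can be redistributed into two
  matchings of sizes |A| - 1 and |B| + 1 (classically: swap along an alternating path with more
  A-edges).  Since no matching of a graph on 2n vertices has more than n edges and the average
  size is n - 1, repeatedly rebalancing a matching of size n against one of size < n - 1 makes
  all sizes equal to n - 1 without changing the union.

  The exchange step is proved by induction on |A| + |B| instead of via components of A \<union> B.
  Either some edge of A avoids all of B and can simply be moved, or by pigeonhole some B-edge
  {y, z} meets two A-edges {x, y}, {w, z}; then either {x, w} \<in> B closes an alternating 4-cycle,
  which can be set aside, or the path x-y-z-w is contracted to the A-edge {x, w}.
*)

lemma matching_iff_pairwise_disjnt: "matching E M \<longleftrightarrow> M \<subseteq> E \<and> pairwise disjnt M"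
  unfolding matching_def pairwise_def disjnt_def by blast

lemma pairwise_disjnt_insert_avoiding:
  "pairwise disjnt P \<Longrightarrow> disjnt a (\<Union>P) \<Longrightarrow> pairwise disjnt (insert a P)"
  by (auto simp: pairwise_insert disjnt_def)

lemma pairwise_disjnt_Un:
  assumes "pairwise disjnt A" "pairwise disjnt B" "disjnt (\<Union>A) (\<Union>B)"
  shows "pairwise disjnt (A \<union> B)"
proof (rule pairwiseI)
  fix a b assume ab: "a \<in> A \<union> B" "b \<in> A \<union> B" "a \<noteq> b"
  have "disjnt a b" if "a \<in> A" "b \<in> B" for a b
    using assms(3) that by simp
  then show "disjnt a b"
    using ab assms(1,2) by (metis UnE disjnt_sym pairwiseD)
qed

lemma disjnt_Union_Diff:
  assumes "pairwise disjnt P" "X \<subseteq> P"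
  shows "disjnt (\<Union>X) (\<Union>(P - X))"
  using assms(2) by (auto intro!: pairwiseD[OF assms(1)])

lemma notin_Union_Diff_singleton:
  assumes "pairwise disjnt P" "e \<in> P" "v \<in> e"
  shows "v \<notin> \<Union>(P - {e})"
  using disjnt_Union_Diff[OF assms(1), of "{e}"] assms(2,3) by (auto simp: disjnt_def)

lemma disjoint_if_card_Un_eq:
  "finite A \<Longrightarrow> finite B \<Longrightarrow> card (A \<union> B) = card A + card B \<Longrightarrow> A \<inter> B = {}"
  using card_Un_Int[of A B] by simp

lemma pigeonhole_shared_image:
  assumes "finite B" "card B < card A" "\<forall>a\<in>A. \<exists>b\<in>B. R a b"
  obtains a1 a2 b where "a1 \<in> A" "a2 \<in> A" "a1 \<noteq> a2" "b \<in> B" "R a1 b" "R a2 b"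
proof -
  obtain f where f: "\<forall>a\<in>A. f a \<in> B \<and> R a (f a)"
    using bchoice[OF assms(3)[unfolded Bex_def]] by blast
  have "\<not> inj_on f A"
    using card_inj_on_le[of f A B] f assms(1,2) by force
  then show thesis
    using that f unfolding inj_on_def by metis
qed

lemma card_matching_le:
  assumes "finite V" "\<Union>M \<subseteq> V" "pairwise disjnt M" "\<forall>e\<in>M. card e = 2"
  shows "2 * card M \<le> card V"
proof -
  have "\<And>e. e \<in> M \<Longrightarrow> finite e"
    using assms(4) card.infinite by fastforce
  then have "card (\<Union>M) = 2 * card M"
    using card_Union_disjoint[OF assms(3)] assms(4) by simp
  then show ?thesis
    using card_mono[OF assms(1,2)] by simp
qed

lemma below_average_exists:
  fixes f :: "nat \<Rightarrow> nat"
  assumes "(\<Sum>i<t. f i) = k * t" "i < t" "k < f i"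
  obtains j where "j < t" "f j < k"
proof (rule ccontr)
  assume "\<not> thesis"
  then have "\<forall>j\<in>{..<t}. k \<le> f j"
    using that by (meson lessThan_iff not_le)
  then have "(\<Sum>j<t. k) < (\<Sum>j<t. f j)"
    using assms(2,3) by (intro sum_strict_mono_ex1) auto
  then show False
    using assms(1) by simp
qed

lemma all_eq_average:
  fixes f :: "nat \<Rightarrow> nat"
  assumes "(\<Sum>i<t. f i) = k * t" "\<forall>i<t. f i \<le> k"
  shows "\<forall>i<t. f i = k"
proof (rule ccontr)
  assume "\<not> (\<forall>i<t. f i = k)"
  then obtain i where "i < t" "f i < k"
    using assms(2) le_neq_implies_less by blast
  then have "(\<Sum>j<t. f j) < (\<Sum>j<t. k)"
    using assms(2) by (intro sum_strict_mono_ex1) auto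
  then show False
    using assms(1) by simp
qed

(* Stated additively, since 'c need not have a subtraction. *)
lemma sum_fun_upd2:
  fixes g :: "'b \<Rightarrow> 'c::comm_monoid_add"
  assumes "finite S" "i \<in> S" "j \<in> S" "i \<noteq> j"
  shows "(\<Sum>l\<in>S. g ((h(i := a, j := b)) l)) + g (h i) + g (h j) = (\<Sum>l\<in>S. g (h l)) + g a + g b"
proof -
  have split: "(\<Sum>l\<in>S. f l) = f i + f j + (\<Sum>l\<in>S - {i} - {j}. f l)" for f :: "'a \<Rightarrow> 'c"
  proof -
    have "j \<in> S - {i}" using assms by simp
    then show ?thesis
      using assms sum.remove[of S i f] sum.remove[of "S - {i}" j f] by (simp add: add.assoc)
  qed
  define R where "R = (\<Sum>l\<in>S - {i} - {j}. g (h l))"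
  have "(\<Sum>l\<in>S - {i} - {j}. g ((h(i := a, j := b)) l)) = R"
    unfolding R_def by (rule sum.cong) auto
  then have "(\<Sum>l\<in>S. g ((h(i := a, j := b)) l)) = g a + g b + R"
    using split[of "\<lambda>l. g ((h(i := a, j := b)) l)"] assms(4) by simp
  moreover have "(\<Sum>l\<in>S. g (h l)) = g (h i) + g (h j) + R"
    unfolding R_def by (rule split)
  ultimately show ?thesis
    by (simp only: ac_simps)
qed

lemma UN_fun_upd2:
  assumes "i \<in> S" "j \<in> S" "i \<noteq> j" "A \<union> B = h i \<union> h j"
  shows "(\<Union>l\<in>S. (h(i := A, j := B)) l) = (\<Union>l\<in>S. h l)"
proof -
  have split: "(\<Union>l\<in>S. f l) = f i \<union> f j \<union> (\<Union>l\<in>S - {i, j}. f l)" for f :: "'a \<Rightarrow> 'b set"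
    using assms(1,2) by blast
  have "(\<Union>l\<in>S - {i, j}. (h(i := A, j := B)) l) = (\<Union>l\<in>S - {i, j}. h l)"
    by (rule SUP_cong) auto
  then show ?thesis
    using split[of "h(i := A, j := B)"] split[of h] assms(3,4) by simp
qed

definition disjoint_matchings :: "'a set set \<Rightarrow> 'a set set \<Rightarrow> bool" where
  "disjoint_matchings A B \<longleftrightarrow> finite A \<and> finite B \<and> A \<inter> B = {} \<and>
     pairwise disjnt A \<and> pairwise disjnt B \<and> (\<forall>e\<in>A \<union> B. card e = 2)"

definition rebalancing :: "'a set set \<Rightarrow> 'a set set \<Rightarrow> 'a set set \<Rightarrow> 'a set set \<Rightarrow> bool" where
  "rebalancing A B A' B' \<longleftrightarrow> pairwise disjnt A' \<and> pairwise disjnt B' \<and> A' \<union> B' = A \<union> B \<and>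
     card A' + 1 = card A \<and> card B' = card B + 1"

lemma disjoint_matchings_subset:
  assumes "disjoint_matchings A B" "A0 \<subseteq> A" "B0 \<subseteq> B"
  shows "disjoint_matchings A0 B0"
proof -
  have "finite A" "finite B" "A \<inter> B = {}" "pairwise disjnt A" "pairwise disjnt B" "\<forall>e\<in>A \<union> B. card e = 2"
    using assms(1) unfolding disjoint_matchings_def by blast+
  then show ?thesis
    unfolding disjoint_matchings_def
    using finite_subset[OF assms(2)] finite_subset[OF assms(3)]
      pairwise_subset[OF _ assms(2)] pairwise_subset[OF _ assms(3)] assms(2,3) by blast
qed

lemma rebalancing_Un:
  assumes reb: "rebalancing A B A' B'" and fin: "finite A" "finite B" "finite X" "finite Y"
    and match: "pairwise disjnt X" "pairwise disjnt Y"
    and avoid: "disjnt (\<Union>X) (\<Union>(A \<union> B))" "disjnt (\<Union>Y) (\<Union>(A \<union> B))"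
    and new: "X \<inter> (A \<union> B) = {}" "Y \<inter> (A \<union> B) = {}"
  shows "rebalancing (A \<union> X) (B \<union> Y) (A' \<union> X) (B' \<union> Y)"
proof -
  have U: "A' \<union> B' = A \<union> B"
    using reb by (simp add: rebalancing_def)
  then have sub: "A' \<subseteq> A \<union> B" "B' \<subseteq> A \<union> B"
    by blast+
  then have "finite A'" "finite B'"
    using fin finite_subset by blast+
  moreover have "A' \<inter> X = {}" "B' \<inter> Y = {}" "A \<inter> X = {}" "B \<inter> Y = {}"
    using sub new by blast+
  ultimately have "card (A' \<union> X) + 1 = card (A \<union> X)" "card (B' \<union> Y) = card (B \<union> Y) + 1"
    using reb fin by (simp_all add: card_Un_disjoint rebalancing_def)
  moreover have avoid': "disjnt (\<Union>A') (\<Union>X)" "disjnt (\<Union>B') (\<Union>Y)"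
    using sub avoid unfolding disjnt_def by blast+
  moreover have "pairwise disjnt (A' \<union> X)" "pairwise disjnt (B' \<union> Y)"
    using reb match avoid' unfolding rebalancing_def by (simp_all add: pairwise_disjnt_Un)
  moreover have "(A' \<union> X) \<union> (B' \<union> Y) = (A \<union> X) \<union> (B \<union> Y)"
    using U by blast
  ultimately show ?thesis
    unfolding rebalancing_def by simp
qed

lemma rebalancing_move_free_edge:
  assumes "disjoint_matchings A B" "a \<in> A" "disjnt a (\<Union>B)"
  shows "rebalancing A B (A - {a}) (insert a B)"
proof -
  have "a \<notin> B"
    using assms unfolding disjoint_matchings_def by blast
  moreover have "card (A - {a}) + 1 = card A"
    using assms unfolding disjoint_matchings_def by (simp add: card_Suc_Diff1 del: card_Diff_insert)
  ultimately show ?thesis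
    using assms unfolding disjoint_matchings_def rebalancing_def
    by (auto intro: pairwise_subset pairwise_disjnt_insert_avoiding)
qed

lemma obtain_path_labelling:
  assumes "card a1 = 2" "card a2 = 2" "card b = 2" "disjnt a1 a2" "\<not> disjnt a1 b" "\<not> disjnt a2 b"
  obtains x y z w where "a1 = {x, y}" "a2 = {w, z}" "b = {y, z}" "distinct [x, y, z, w]"
proof -
  obtain u v where b: "b = {u, v}" "u \<noteq> v"
    using assms(3) by (auto simp: card_2_iff)
  obtain y z where yz: "b = {y, z}" "y \<in> a1" "z \<in> a2"
  proof (cases "u \<in> a1")
    case True
    then have "v \<in> a2"
      using assms(4,6) b by (auto simp: disjnt_def)
    then show thesis
      using that[of u v] b True by blast
  next
    case False
    then have "v \<in> a1" "u \<in> a2"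
      using assms(4-6) b by (auto simp: disjnt_def)
    then show thesis
      using that[of v u] b by (simp add: insert_commute)
  qed
  obtain x where "a1 = {x, y}" "x \<noteq> y"
    using assms(1) yz(2) by (auto simp: card_2_iff)
  moreover obtain w where "a2 = {w, z}" "w \<noteq> z"
    using assms(2) yz(3) by (auto simp: card_2_iff)
  moreover have "distinct [x, y, z, w]"
    using calculation yz assms(4) by (auto simp: disjnt_def)
  ultimately show thesis
    using that yz(1) by blast
qed

lemma uncontract_and_insert:
  assumes match: "pairwise disjnt P" "pairwise disjnt Q" and fin: "finite P" "finite Q"
    and c: "{x, w} \<in> P" "{x, w} \<notin> Q" and avoid: "y \<notin> \<Union>(P \<union> Q)" "z \<notin> \<Union>(P \<union> Q)"
    and ne: "x \<noteq> w" "y \<noteq> z"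
  defines "P' \<equiv> insert {x, y} (insert {w, z} (P - {{x, w}}))" and "Q' \<equiv> insert {y, z} Q"
  shows "pairwise disjnt P'" "pairwise disjnt Q'" "card P' = card P + 1" "card Q' = card Q + 1"
    and "P' \<union> Q' = (P \<union> Q - {{x, w}}) \<union> {{x, y}, {w, z}, {y, z}}"
proof -
  have "x \<notin> \<Union>(P - {{x, w}})" "w \<notin> \<Union>(P - {{x, w}})"
    using notin_Union_Diff_singleton[OF match(1) c(1)] by simp_all
  moreover have "x \<noteq> z" "y \<noteq> w"
    using c(1) avoid by blast+
  moreover have "pairwise disjnt (P - {{x, w}})"
    using match(1) by (rule pairwise_subset) blast
  ultimately show "pairwise disjnt P'"
    using avoid ne unfolding P'_def by (intro pairwise_disjnt_insert_avoiding) (auto simp: disjnt_def)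
  show "pairwise disjnt Q'"
    using match(2) avoid unfolding Q'_def by (intro pairwise_disjnt_insert_avoiding) (auto simp: disjnt_def)
  have "{x, y} \<notin> P - {{x, w}}" "{w, z} \<notin> P - {{x, w}}" "{x, y} \<noteq> {w, z}"
    using c(1) avoid ne by (auto simp: doubleton_eq_iff)
  moreover have "card (P - {{x, w}}) + 1 = card P"
    using c(1) fin(1) by (simp add: card_Suc_Diff1 del: card_Diff_insert)
  ultimately show "card P' = card P + 1"
    using fin(1) unfolding P'_def by simp
  have "{y, z} \<notin> Q"
    using avoid by blast
  then show "card Q' = card Q + 1"
    using fin(2) unfolding Q'_def by simp
  show "P' \<union> Q' = (P \<union> Q - {{x, w}}) \<union> {{x, y}, {w, z}, {y, z}}"
    using c(2) unfolding P'_def Q'_def by blast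
qed

lemma rebalancing_alternating_cycle:
  fixes A B :: "'a set set"
  assumes IH: "\<And>A0 B0 :: 'a set set. disjoint_matchings A0 B0 \<Longrightarrow> card B0 < card A0 \<Longrightarrow>
      card A0 + card B0 < card A + card B \<Longrightarrow> \<exists>A' B'. rebalancing A0 B0 A' B'"
    and dm: "disjoint_matchings A B" and lt: "card B < card A"
    and A: "{x, y} \<in> A" "{w, z} \<in> A" and B: "{y, z} \<in> B" "{x, w} \<in> B"
    and dist: "distinct [x, y, z, w]"
  shows "\<exists>A' B'. rebalancing A B A' B'"
proof -
  define X where "X = {{x, y}, {w, z}}"
  define Y where "Y = {{y, z}, {x, w}}"
  have fin: "finite A" "finite B" and disj: "A \<inter> B = {}"
    and match: "pairwise disjnt A" "pairwise disjnt B"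
    using dm unfolding disjoint_matchings_def by blast+
  have XY: "X \<subseteq> A" "Y \<subseteq> B" "card X = 2" "card Y = 2"
    using A B dist by (auto simp: X_def Y_def doubleton_eq_iff)
  have "finite X" "finite Y"
    unfolding X_def Y_def by simp_all
  moreover have "card X \<le> card A" "card Y \<le> card B"
    using card_mono[OF fin(1) XY(1)] card_mono[OF fin(2) XY(2)] by simp_all
  ultimately have "card (A - X) + 2 = card A" "card (B - Y) + 2 = card B"
    using XY by (simp_all add: card_Diff_subset)
  then obtain A1 B1 where "rebalancing (A - X) (B - Y) A1 B1"
    using IH[of "A - X" "B - Y"] disjoint_matchings_subset[OF dm] lt by fastforce
  moreover have "\<Union>X = \<Union>Y"
    unfolding X_def Y_def by auto
  moreover have "disjnt (\<Union>X) (\<Union>(A - X))" "disjnt (\<Union>Y) (\<Union>(B - Y))"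
    using disjnt_Union_Diff match XY by blast+
  moreover have "pairwise disjnt X" "pairwise disjnt Y"
    using match XY pairwise_subset by blast+
  moreover have "X \<inter> ((A - X) \<union> (B - Y)) = {}" "Y \<inter> ((A - X) \<union> (B - Y)) = {}"
    using XY disj by blast+
  ultimately have "rebalancing (A - X \<union> X) (B - Y \<union> Y) (A1 \<union> X) (B1 \<union> Y)"
    using fin by (intro rebalancing_Un) (simp_all add: X_def Y_def)
  moreover have "A - X \<union> X = A" "B - Y \<union> Y = B"
    using XY by blast+
  ultimately show ?thesis
    by metis
qed

lemma rebalancing_contract_path:
  fixes A B :: "'a set set"
  assumes IH: "\<And>A0 B0 :: 'a set set. disjoint_matchings A0 B0 \<Longrightarrow> card B0 < card A0 \<Longrightarrow>
      card A0 + card B0 < card A + card B \<Longrightarrow> \<exists>A' B'. rebalancing A0 B0 A' B'"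
    and dm: "disjoint_matchings A B" and lt: "card B < card A"
    and A: "{x, y} \<in> A" "{w, z} \<in> A" and B: "{y, z} \<in> B" "{x, w} \<notin> B"
    and dist: "distinct [x, y, z, w]"
  shows "\<exists>A' B'. rebalancing A B A' B'"
proof -
  define c where "c = {x, w}"
  define A0 where "A0 = insert c (A - {{x, y}, {w, z}})"
  define B0 where "B0 = B - {{y, z}}"
  have fin: "finite A" "finite B" and disj: "A \<inter> B = {}"
    and match: "pairwise disjnt A" "pairwise disjnt B" and edges: "\<forall>e\<in>A \<union> B. card e = 2"
    using dm unfolding disjoint_matchings_def by blast+
  have x: "x \<notin> \<Union>(A - {{x, y}})" and y: "y \<notin> \<Union>(A - {{x, y}})"
    and w: "w \<notin> \<Union>(A - {{w, z}})" and z: "z \<notin> \<Union>(A - {{w, z}})"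
    and yzB: "y \<notin> \<Union>B0" "z \<notin> \<Union>B0"
    using notin_Union_Diff_singleton[OF match(1) A(1)] notin_Union_Diff_singleton[OF match(1) A(2)]
      notin_Union_Diff_singleton[OF match(2) B(1)] unfolding B0_def by simp_all
  have "c \<noteq> {x, y}"
    using dist by (auto simp: c_def doubleton_eq_iff)
  then have cA: "c \<notin> A"
    using x unfolding c_def by blast
  have cB: "c \<notin> B"
    using B(2) by (simp add: c_def)
  have dm0: "disjoint_matchings A0 B0"
  proof -
    have "disjnt c (\<Union>(A - {{x, y}, {w, z}}))"
      using x w unfolding c_def disjnt_def by blast
    then have "pairwise disjnt A0"
      unfolding A0_def using match(1) by (blast intro: pairwise_disjnt_insert_avoiding pairwise_subset)
    moreover have "pairwise disjnt B0"
      unfolding B0_def using match(2) by (rule pairwise_subset) blast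
    moreover have "card c = 2"
      using dist by (simp add: c_def)
    ultimately show ?thesis
      using fin disj edges cB unfolding disjoint_matchings_def A0_def B0_def by blast
  qed
  have "{x, y} \<noteq> {w, z}"
    using dist by (auto simp: doubleton_eq_iff)
  moreover have "card {{x, y}, {w, z}} \<le> card A"
    using A by (intro card_mono[OF fin(1)]) simp
  moreover have "0 < card B"
    using B(1) fin(2) by (auto simp: card_gt_0_iff)
  ultimately have cards: "card A0 + 1 = card A" "card B0 + 1 = card B"
    using A B(1) fin cA unfolding A0_def B0_def
    by (simp_all add: card_Diff_subset card_Suc_Diff1 del: card_Diff_insert)
  then obtain A0' B0' where reb0: "rebalancing A0 B0 A0' B0'"
    using IH[OF dm0] lt by fastforce
  then have U0: "A0' \<union> B0' = A0 \<union> B0"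
    by (simp add: rebalancing_def)
  have fin0: "finite A0" "finite B0" "A0 \<inter> B0 = {}"
    using dm0 unfolding disjoint_matchings_def by blast+
  then have fin0': "finite A0'" "finite B0'"
    using U0 by (metis finite_Un)+
  \<comment> \<open>The cardinalities add up, so c lands on exactly one side.\<close>
  have "A0' \<inter> B0' = {}"
    using reb0 fin0 fin0' U0 card_Un_disjoint[of A0 B0]
    by (intro disjoint_if_card_Un_eq) (simp_all add: rebalancing_def)
  moreover have "c \<in> A0' \<union> B0'"
    using U0 unfolding A0_def by blast
  ultimately consider "c \<in> A0'" "c \<notin> B0'" | "c \<in> B0'" "c \<notin> A0'"
    by blast
  moreover have "\<Union>(A0' \<union> B0') \<subseteq> c \<union> (\<Union>(A - {{x, y}}) \<inter> \<Union>(A - {{w, z}})) \<union> \<Union>B0"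
    unfolding U0 A0_def by blast
  then have avoid: "y \<notin> \<Union>(A0' \<union> B0')" "z \<notin> \<Union>(A0' \<union> B0')"
    using y z yzB dist unfolding c_def by auto
  moreover have restore: "(A0' \<union> B0' - {c}) \<union> {{x, y}, {w, z}, {y, z}} = A \<union> B"
    using U0 A B(1) cA cB unfolding A0_def B0_def by blast
  moreover have ne: "x \<noteq> w" "y \<noteq> z"
    using dist by auto
  moreover note new = uncontract_and_insert[where x = x and w = w and y = y and z = z, folded c_def]
  ultimately show ?thesis
  proof cases
    case 1
    note new = new[of A0' B0', OF _ _ fin0' 1 avoid ne]
    have "rebalancing A B (insert {x, y} (insert {w, z} (A0' - {c}))) (insert {y, z} B0')"
      using new reb0 cards restore unfolding rebalancing_def by simp
    then show ?thesis
      by blast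
  next
    case 2
    note new = new[of B0' A0', OF _ _ fin0'(2,1) 2]
    have "rebalancing A B (insert {y, z} A0') (insert {x, y} (insert {w, z} (B0' - {c})))"
      using new avoid ne reb0 cards restore unfolding rebalancing_def by (simp add: Un_commute)
    then show ?thesis
      by blast
  qed
qed

lemma rebalancing_exists_disjoint:
  fixes A B :: "'a set set"
  assumes "disjoint_matchings A B" "card B < card A"
  shows "\<exists>A' B'. rebalancing A B A' B'"
  using assms
proof (induction "card A + card B" arbitrary: A B rule: less_induct)
  case less
  have fin: "finite B" and match: "pairwise disjnt A" and edges: "\<forall>e\<in>A \<union> B. card e = 2"
    using less.prems(1) unfolding disjoint_matchings_def by blast+
  show ?case
  proof (cases "\<exists>a\<in>A. disjnt a (\<Union>B)")
    case True
    then show ?thesis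
      using rebalancing_move_free_edge[OF less.prems(1)] by blast
  next
    case False
    then have "\<forall>a\<in>A. \<exists>b\<in>B. \<not> disjnt a b"
      by simp
    then obtain a1 a2 b where a: "a1 \<in> A" "a2 \<in> A" "a1 \<noteq> a2" and b: "b \<in> B"
      and meet: "\<not> disjnt a1 b" "\<not> disjnt a2 b"
      by (rule pigeonhole_shared_image[OF fin less.prems(2)])
    have "card a1 = 2" "card a2 = 2" "card b = 2"
      using edges a b by blast+
    moreover have "disjnt a1 a2"
      using match a by (simp add: pairwiseD)
    ultimately obtain x y z w where path: "a1 = {x, y}" "a2 = {w, z}" "b = {y, z}"
      and dist: "distinct [x, y, z, w]"
      by (rule obtain_path_labelling[OF _ _ _ _ meet])
    have A: "{x, y} \<in> A" "{w, z} \<in> A" and B: "{y, z} \<in> B"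
      using a b path by simp_all
    show ?thesis
    proof (cases "{x, w} \<in> B")
      case True
      show ?thesis
        by (rule rebalancing_alternating_cycle[OF less.hyps less.prems A B True dist])
    next
      case False
      show ?thesis
        by (rule rebalancing_contract_path[OF less.hyps less.prems A B False dist])
    qed
  qed
qed

lemma rebalancing_exists:
  assumes fin: "finite A" "finite B" and match: "pairwise disjnt A" "pairwise disjnt B"
    and edges: "\<forall>e\<in>A \<union> B. card e = 2" and lt: "card B < card A"
  shows "\<exists>A' B'. rebalancing A B A' B'"
proof -
  define C where "C = A \<inter> B"
  have C: "C \<subseteq> A" "C \<subseteq> B" "finite C"
    using fin unfolding C_def by auto
  have "disjoint_matchings (A - C) (B - C)"
    using fin match edges unfolding disjoint_matchings_def C_def
    by (auto intro: pairwise_subset)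
  moreover have "card (B - C) < card (A - C)"
    using C fin lt card_mono[OF fin(2) C(2)] by (simp add: card_Diff_subset)
  ultimately obtain A1 B1 where "rebalancing (A - C) (B - C) A1 B1"
    using rebalancing_exists_disjoint by blast
  moreover have "disjnt (\<Union>C) (\<Union>(A - C \<union> (B - C)))"
    using disjnt_Union_Diff[OF match(1) C(1)] disjnt_Union_Diff[OF match(2) C(2)] by simp
  moreover have "pairwise disjnt C"
    using match(1) C(1) by (rule pairwise_subset)
  ultimately have "rebalancing (A - C \<union> C) (B - C \<union> C) (A1 \<union> C) (B1 \<union> C)"
    using fin C by (intro rebalancing_Un) auto
  moreover have "A - C \<union> C = A" "B - C \<union> C = B"
    using C by blast+
  ultimately show ?thesis
    by metis
qed

lemma equalise_matchings:
  fixes M :: "nat \<Rightarrow> 'a set set" and k t :: nat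
  assumes "\<forall>i<t. finite (M i) \<and> pairwise disjnt (M i) \<and> card (M i) \<le> k + 1"
    and "\<forall>e\<in>(\<Union>i<t. M i). card e = 2"
    and "(\<Sum>i<t. card (M i)) = k * t"
  shows "\<exists>N. (\<forall>i<t. pairwise disjnt (N i) \<and> card (N i) = k) \<and> (\<Union>i<t. N i) = (\<Union>i<t. M i)"
  using assms
proof (induction "card {i. i < t \<and> k < card (M i)}" arbitrary: M rule: less_induct)
  case less
  note fam = less.prems(1) and edges = less.prems(2) and total = less.prems(3)
  show ?case
  proof (cases "\<forall>i<t. card (M i) \<le> k")
    case True
    then show ?thesis
      using all_eq_average[OF total] fam by blast
  next
    case False
    then obtain i where i: "i < t" "k < card (M i)"
      by (auto simp: not_le)
    then have card_i: "card (M i) = k + 1"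
      using fam by fastforce
    obtain j where j: "j < t" "card (M j) < k"
      using below_average_exists[OF total i] .
    have "i \<noteq> j"
      using i j by auto
    have "\<forall>e\<in>M i \<union> M j. card e = 2"
      using edges i(1) j(1) by blast
    then obtain A' B' where reb: "rebalancing (M i) (M j) A' B'"
      using rebalancing_exists[of "M i" "M j"] fam i j by auto
    then have U: "A' \<union> B' = M i \<union> M j" and cards: "card A' = k" "card B' = card (M j) + 1"
      using card_i by (simp_all add: rebalancing_def)
    define M' where "M' = M(i := A', j := B')"
    have "\<forall>l<t. finite (M' l) \<and> pairwise disjnt (M' l) \<and> card (M' l) \<le> k + 1"
    proof -
      have "finite A'" "finite B'"
        using U fam i(1) j(1) by (metis finite_Un)+
      then show ?thesis
        using fam reb cards j unfolding M'_def rebalancing_def by auto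
    qed
    moreover have "(\<Union>l<t. M' l) = (\<Union>l<t. M l)"
      unfolding M'_def using UN_fun_upd2[of i "{..<t}" j A' B' M] U i j \<open>i \<noteq> j\<close> by simp
    moreover have "(\<Sum>l<t. card (M' l)) = k * t"
      using sum_fun_upd2[of "{..<t}" i j card M A' B'] i j \<open>i \<noteq> j\<close> card_i cards total
      unfolding M'_def by simp
    moreover have "card {l. l < t \<and> k < card (M' l)} < card {l. l < t \<and> k < card (M l)}"
    proof -
      have large: "{l. l < t \<and> k < card (M' l)} = {l. l < t \<and> k < card (M l)} - {i}"
        using cards j \<open>i \<noteq> j\<close> unfolding M'_def by auto
      show ?thesis
        unfolding large by (rule card_Diff1_less) (use i in auto)
    qed
    ultimately show ?thesis
      using less.hyps[of M'] edges by auto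
  qed
qed

theorem lemma1:
  fixes V :: "'a set" and E :: "'a set set" and M :: "nat \<Rightarrow> 'a set set" and n t :: nat
  assumes "cubic_graph V E"
    and "card V = 2 * n"
    and "\<forall>i<t. matching E (M i)"
    and "(\<Union>i<t. M i) = E"
    and "(\<Sum>i<t. card (M i)) = (n - 1) * t"
  shows "\<exists>N :: nat \<Rightarrow> 'a set set. (\<forall>i<t. matching E (N i) \<and> card (N i) = n - 1) \<and> (\<Union>i<t. N i) = E"
proof -
  have V: "finite V" "\<Union>E \<subseteq> V" and edges: "\<forall>e\<in>E. card e = 2"
    using assms(1) unfolding cubic_graph_def simple_graph_def by blast+
  then have "E \<subseteq> Pow V"
    by blast
  then have "finite E"
    by (rule finite_subset) (simp add: V(1))
  \<comment> \<open>card (M i) \<le> n \<le> (n - 1) + 1, also when n = 0.\<close>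
  have "\<forall>i<t. finite (M i) \<and> pairwise disjnt (M i) \<and> card (M i) \<le> (n - 1) + 1"
  proof (intro allI impI)
    fix i assume "i < t"
    then have M: "M i \<subseteq> E" "pairwise disjnt (M i)"
      using assms(3) matching_iff_pairwise_disjnt by blast+
    then have "2 * card (M i) \<le> card V"
      using V edges by (intro card_matching_le) auto
    then show "finite (M i) \<and> pairwise disjnt (M i) \<and> card (M i) \<le> (n - 1) + 1"
      using M \<open>finite E\<close> assms(2) finite_subset by auto
  qed
  then obtain N where "\<forall>i<t. pairwise disjnt (N i) \<and> card (N i) = n - 1" "(\<Union>i<t. N i) = E"
    using equalise_matchings[of t M "n - 1"] assms(4,5) edges by auto
  then show ?thesis
    using matching_iff_pairwise_disjnt by blast
qed

end
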